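(* Let $\tau_0,\tau_1,\tau_2>0$, $\alpha>0$, and let $a\in\mathcal{B}_\alpha$. Then every root of the polynomial $p_a(z)=z^n+a_1z^{n-1}+\dots+a_n$ has modulus less than $\alpha$. Consequently the companion matrix $A=\mathrm{CC}(a)$ has spectral radius $\rho(A)<\alpha$.
   Context: $\mathcal{C}=\{z\in\mathbb{C}:\Re z\ge(1+\tau_0)|\Im z|\}\cap\{z\in\mathbb{C}:\tau_1<\Re z<\tau_2\}$, and $\mathcal{B}_\alpha=\{a\in\mathbb{R}^n:\ p_a(z)/z^n\in\mathcal{C}\text{ for all } z\in\mathbb{C} \text{ with } |z|=\alpha\}$. $\mathrm{CC}(a)$ is the $n\times n$ companion matrix with ones on the superdiagonal, zeros elsewhere in the first $n-1$ rows, and last row $[-a_n,\dots,-a_1]$; its characteristic polynomial is $p_a$. *)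

theory Defs
  imports "Jordan_Normal_Form.Spectral_Radius"
begin

definition cone_C :: "real \<Rightarrow> real \<Rightarrow> real \<Rightarrow> complex set" where
  "cone_C \<tau>0 \<tau>1 \<tau>2 =
     {z. Re z \<ge> (1 + \<tau>0) * \<bar>Im z\<bar>} \<inter> {z. \<tau>1 < Re z \<and> Re z < \<tau>2}"

definition p_a :: "nat \<Rightarrow> (nat \<Rightarrow> real) \<Rightarrow> complex poly" where
  "p_a n a = monom 1 n + (\<Sum>k = 1..n. monom (complex_of_real (a k)) (n - k))"

definition B_alpha :: "real \<Rightarrow> real \<Rightarrow> real \<Rightarrow> nat \<Rightarrow> real \<Rightarrow> (nat \<Rightarrow> real) set" where
  "B_alpha \<tau>0 \<tau>1 \<tau>2 n \<alpha> =
     {a. \<forall>z::complex. cmod z = \<alpha> \<longrightarrow> poly (p_a n a) z / z ^ n \<in> cone_C \<tau>0 \<tau>1 \<tau>2}"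

text \<open>Companion matrix CC(a) (0-indexed rows/columns): ones on the superdiagonal in the
  first n-1 rows, last row [-a_n, ..., -a_1].\<close>
definition CC :: "nat \<Rightarrow> (nat \<Rightarrow> real) \<Rightarrow> real mat" where
  "CC n a = mat n n (\<lambda>(i, j). if i < n - 1 then (if j = i + 1 then 1 else 0) else - a (n - j))"

end

theory Submission
  imports Defs "HOL-Complex_Analysis.Complex_Analysis"
begin

text \<open>Substituting \<open>w = 1/z\<close>, the function \<open>p_a(z)/z^n\<close> becomes the polynomial
  \<open>q(w) = 1 + a_1 w + \<dots> + a_n w^n\<close>, which is entire. Membership in \<open>B_\<alpha>\<close> gives
  \<open>Re q > \<tau>1\<close> on the circle \<open>|w| = 1/\<alpha>\<close>, hence, by the minimum principle for the harmonic
  function \<open>Re q\<close>, \<open>Re q \<ge> \<tau>1 > 0\<close> on the whole disc \<open>|w| \<le> 1/\<alpha>\<close>. So \<open>p_a\<close> has no root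
  with \<open>|z| \<ge> \<alpha>\<close>. An eigenvector of the companion matrix for \<open>\<lambda>\<close> is a nonzero multiple of
  \<open>(1, \<lambda>, \<dots>, \<lambda>^(n-1))\<close>, and its last row says \<open>p_a(\<lambda>) = 0\<close>; so the spectral radius is the
  modulus of some root of \<open>p_a\<close>.\<close>

lemma poly_p_a: "poly (p_a n a) z = z^n + (\<Sum>k = 1..n. complex_of_real (a k) * z^(n-k))"
  by (simp add: p_a_def poly_sum poly_monom)

lemma poly_p_a_div_power:
  assumes "z \<noteq> 0"
  shows "poly (p_a n a) z / z^n = 1 + (\<Sum>k = 1..n. complex_of_real (a k) * (inverse z)^k)"
proof -
  have "z^(n-k) / z^n = (inverse z)^k" if "k \<le> n" for k
    using that assms by (simp add: power_diff power_inverse divide_inverse)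
  then have "(\<Sum>k = 1..n. complex_of_real (a k) * z^(n-k)) / z^n
      = (\<Sum>k = 1..n. complex_of_real (a k) * (inverse z)^k)"
    unfolding sum_divide_distrib by (intro sum.cong) (auto simp flip: times_divide_eq_right)
  then show ?thesis
    using assms by (simp add: poly_p_a add_divide_distrib)
qed

lemma Re_p_a_div_power_outside_ball:
  assumes "\<alpha> > 0" and "a \<in> B_alpha \<tau>0 \<tau>1 \<tau>2 n \<alpha>" and "cmod z \<ge> \<alpha>"
  shows "Re (poly (p_a n a) z / z^n) \<ge> \<tau>1"
proof -
  define q where "q w = 1 + (\<Sum>k = 1..n. complex_of_real (a k) * w^k)" for w
  have q: "poly (p_a n a) u / u^n = q (inverse u)" if "u \<noteq> 0" for u
    using poly_p_a_div_power[OF that] by (simp add: q_def)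
  have hol: "(\<lambda>w. - q w) holomorphic_on UNIV"
    unfolding q_def by (intro holomorphic_intros)
  have "Re (- q w) \<le> - \<tau>1" if "w \<in> frontier (cball 0 (1/\<alpha>))" for w
  proof -
    from that have "cmod (inverse w) = \<alpha>" and "w \<noteq> 0"
      using \<open>\<alpha> > 0\<close> by (auto simp: frontier_cball norm_inverse)
    with assms(2) have "q w \<in> cone_C \<tau>0 \<tau>1 \<tau>2"
      using q[of "inverse w"] unfolding B_alpha_def by auto
    then show ?thesis
      unfolding cone_C_def by simp
  qed
  moreover have "inverse z \<in> cball 0 (1/\<alpha>)"
    using assms by (simp add: norm_inverse divide_inverse le_imp_inverse_le)
  ultimately have "Re (- q (inverse z)) \<le> - \<tau>1"
    using maximum_real_frontier[OF holomorphic_on_subset[OF hol]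
        continuous_on_subset[OF holomorphic_on_imp_continuous_on[OF hol]]]
    by blast
  moreover have "z \<noteq> 0"
    using assms by auto
  ultimately show ?thesis
    using q by simp
qed

lemma roots_p_a_in_ball:
  assumes "\<tau>1 > 0" and "\<alpha> > 0" and "a \<in> B_alpha \<tau>0 \<tau>1 \<tau>2 n \<alpha>"
    and "poly (p_a n a) z = 0"
  shows "cmod z < \<alpha>"
  using Re_p_a_div_power_outside_ball[OF assms(2,3), of z] assms(1,4) by force

lemma CC_mult_vec_nth:
  fixes v :: "complex Matrix.vec"
  assumes "v \<in> carrier_vec n" and "i < n"
  shows "(map_mat complex_of_real (CC n a) *\<^sub>v v) $ i =
    (if i < n - 1 then v $ (i + 1) else - (\<Sum>j<n. complex_of_real (a (n - j)) * v $ j))"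
    (is "_ = ?rhs")
proof -
  have "(map_mat complex_of_real (CC n a) *\<^sub>v v) $ i =
      (\<Sum>j<n. (if i < n - 1 then (if j = i + 1 then 1 else 0)
               else - complex_of_real (a (n - j))) * v $ j)"
    using assms by (auto simp: CC_def mult_mat_vec_def scalar_prod_def lessThan_atLeast0
        intro!: sum.cong)
  also have "\<dots> = ?rhs"
    using assms(2) by (auto simp: if_distrib[of "\<lambda>x. x * _"] sum.delta sum_negf cong: if_cong)
  finally show ?thesis .
qed

lemma eigenvector_CC_powers:
  fixes v :: "complex Matrix.vec"
  assumes "eigenvector (map_mat complex_of_real (CC n a)) v l" and "i < n"
  shows "v $ i = l^i * v $ 0"
  using assms(2)
proof (induction i)
  case (Suc i)
  have "v \<in> carrier_vec n" and "map_mat complex_of_real (CC n a) *\<^sub>v v = l \<cdot>\<^sub>v v"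
    using assms(1) unfolding eigenvector_def by (auto simp: CC_def)
  then have "v $ Suc i = l * v $ i"
    using CC_mult_vec_nth[of v n i a] Suc.prems by simp
  then show ?case
    using Suc by simp
qed simp

lemma eigenvalue_CC_root_p_a:
  assumes "n \<ge> 1" and "eigenvalue (map_mat complex_of_real (CC n a)) l"
  shows "poly (p_a n a) l = 0"
proof -
  obtain v where ev: "eigenvector (map_mat complex_of_real (CC n a)) v l"
    using assms(2) unfolding eigenvalue_def by blast
  then have v: "v \<in> carrier_vec n" "v \<noteq> 0\<^sub>v n" "map_mat complex_of_real (CC n a) *\<^sub>v v = l \<cdot>\<^sub>v v"
    unfolding eigenvector_def by (auto simp: CC_def)
  have powers: "v $ j = l^j * v $ 0" if "j < n" for j
    using eigenvector_CC_powers[OF ev that] .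
  have "v $ 0 \<noteq> 0"
  proof
    assume "v $ 0 = 0"
    then have "v $ j = 0" if "j < n" for j
      using powers[OF that] by simp
    with v(1,2) show False
      by (auto intro!: eq_vecI)
  qed
  have "v $ 0 * l^n = l * v $ (n - 1)"
    using powers[of "n - 1"] assms(1) power_minus_mult[of n l] by (simp add: algebra_simps)
  also have "\<dots> = - (\<Sum>j<n. complex_of_real (a (n - j)) * v $ j)"
    using CC_mult_vec_nth[OF v(1), of "n - 1" a] v(1,3) assms(1) by simp
  also have "(\<Sum>j<n. complex_of_real (a (n - j)) * v $ j)
      = v $ 0 * (\<Sum>j<n. complex_of_real (a (n - j)) * l^j)"
    unfolding sum_distrib_left
  proof (intro sum.cong refl)
    fix j assume "j \<in> {..<n}"
    then show "complex_of_real (a (n - j)) * v $ j = v $ 0 * (complex_of_real (a (n - j)) * l^j)"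
      using powers[of j] by simp
  qed
  also have "(\<Sum>j<n. complex_of_real (a (n - j)) * l^j)
      = (\<Sum>k = 1..n. complex_of_real (a k) * l^(n-k))"
    by (rule sum.reindex_bij_witness[of _ "\<lambda>k. n - k" "\<lambda>j. n - j"]) auto
  finally have "v $ 0 * poly (p_a n a) l = 0"
    by (simp add: poly_p_a distrib_left)
  with \<open>v $ 0 \<noteq> 0\<close> show ?thesis
    by simp
qed

theorem lemma4p2:
  fixes \<tau>0 \<tau>1 \<tau>2 \<alpha> :: real and n :: nat and a :: "nat \<Rightarrow> real"
  assumes "\<tau>0 > 0" "\<tau>1 > 0" "\<tau>2 > 0" "\<alpha> > 0" "n \<ge> 1"
    and "a \<in> B_alpha \<tau>0 \<tau>1 \<tau>2 n \<alpha>"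
  shows "(\<forall>z. poly (p_a n a) z = 0 \<longrightarrow> cmod z < \<alpha>)
       \<and> spectral_radius (map_mat complex_of_real (CC n a)) < \<alpha>"
proof -
  have roots: "\<forall>z. poly (p_a n a) z = 0 \<longrightarrow> cmod z < \<alpha>"
    using roots_p_a_in_ball[OF assms(2,4,6)] by blast
  have "map_mat complex_of_real (CC n a) \<in> carrier_mat n n"
    by (simp add: CC_def)
  from spectral_radius_mem_max(1)[OF this] assms(5)
  obtain l where "l \<in> spectrum (map_mat complex_of_real (CC n a))"
    and "spectral_radius (map_mat complex_of_real (CC n a)) = cmod l"
    by force
  moreover from this(1) have "poly (p_a n a) l = 0"
    using eigenvalue_CC_root_p_a[OF assms(5)] by (simp add: spectrum_def)
  ultimately show ?thesis
    using roots by auto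
qed

end
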